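(* Let $\Gamma$ and $\Delta$ be sets and $\{f_\delta\}_{\delta\in\Delta}$ a family of real-valued functions on $\Gamma$ such that (i) for every $\delta\in\Delta$ the support $\{\gamma: f_\delta(\gamma)\ne0\}$ is countable, and (ii) for every $\gamma\in\Gamma$ the set $\{\delta\in\Delta: f_\delta(\gamma)\neq0\}$ is nonempty and countable. Then there exist an index set $D$ and partitions $(\Gamma_d)_{d\in D}$ of $\Gamma$ and $(\Delta_d)_{d\in D}$ of $\Delta$ into countable sets such that for $d_1\neq d_2$ we have $\Gamma_{d_1}\cap\Gamma_{d_2}=\emptyset$, $\Delta_{d_1}\cap\Delta_{d_2}=\emptyset$, and $f_\delta(\gamma)=0$ whenever $\gamma\in\Gamma_{d_1},\delta\in\Delta_{d_2}$ or $\gamma\in\Gamma_{d_2},\delta\in\Delta_{d_1}$. *)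

theory Defs
  imports Complex_Main "HOL-Library.Countable_Set"
begin

end

theory Submission
  imports Defs
begin

text \<open>Join \<open>\<gamma>\<close> and \<open>\<delta>\<close> by an edge whenever \<open>f \<delta> \<gamma> \<noteq> 0\<close>. In the resulting bipartite graph
  on the disjoint union of \<open>\<Gamma>\<close> and \<open>\<Delta>\<close> every vertex has countably many neighbours, so every
  connected component is countable. The components, indexed by chosen representatives,
  split \<open>\<Gamma>\<close> and \<open>\<Delta>\<close> simultaneously, and no edge joins two different components.\<close>

lemma equiv_rtrancl: "sym r \<Longrightarrow> equiv UNIV (r\<^sup>*)"
  by (simp add: equiv_def refl_rtrancl sym_rtrancl trans_rtrancl)

lemma countable_rtrancl_Image_singleton:
  assumes "\<And>x. countable (r `` {x})"
  shows "countable (r\<^sup>* `` {x})"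
proof (rule countable_rtrancl)
  show "countable (r `` Y)" if "countable Y" for Y
    by (rule countable_Image) (rule assms, rule that)
qed simp

lemma equiv_class_representatives:
  assumes "equiv UNIV r"
  obtains D where "\<And>x. \<exists>d\<in>D. x \<in> r `` {d}"
    and "\<And>d1 d2. d1 \<in> D \<Longrightarrow> d2 \<in> D \<Longrightarrow> d1 \<noteq> d2 \<Longrightarrow> r `` {d1} \<inter> r `` {d2} = {}"
proof
  define rep where "rep X = (SOME x. x \<in> X)" for X :: "'a set"
  have class_rep: "r `` {rep X} = X" if X: "X \<in> UNIV // r" for X
  proof -
    from X obtain a where a: "X = r `` {a}"
      by (rule quotientE)
    have "rep X \<in> X"
      unfolding rep_def some_in_eq using in_quotient_imp_non_empty[OF assms X] .
    with a have "(a, rep X) \<in> r"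
      by simp
    with a show ?thesis
      using equiv_class_eq[OF assms] by simp
  qed
  show "\<exists>d\<in>rep ` (UNIV // r). x \<in> r `` {d}" for x
  proof
    show "rep (r `` {x}) \<in> rep ` (UNIV // r)"
      by (intro imageI quotientI) simp
    show "x \<in> r `` {rep (r `` {x})}"
      using class_rep[OF quotientI] equiv_class_self[OF assms] by simp
  qed
  show "r `` {d1} \<inter> r `` {d2} = {}"
    if "d1 \<in> rep ` (UNIV // r)" "d2 \<in> rep ` (UNIV // r)" "d1 \<noteq> d2" for d1 d2
  proof -
    from that obtain X1 X2 where X: "X1 \<in> UNIV // r" "X2 \<in> UNIV // r"
      and d: "d1 = rep X1" "d2 = rep X2"
      by blast
    with \<open>d1 \<noteq> d2\<close> have "X1 \<inter> X2 = {}"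
      using quotient_disj[OF assms] by blast
    then show ?thesis
      by (simp add: d class_rep X)
  qed
qed

lemma countable_components:
  assumes "sym r" and "\<And>x. countable (r `` {x})"
  obtains D where "\<And>x. \<exists>d\<in>D. x \<in> r\<^sup>* `` {d}"
    and "\<And>d1 d2. d1 \<in> D \<Longrightarrow> d2 \<in> D \<Longrightarrow> d1 \<noteq> d2 \<Longrightarrow> r\<^sup>* `` {d1} \<inter> r\<^sup>* `` {d2} = {}"
    and "\<And>d. countable (r\<^sup>* `` {d})"
    and "\<And>d1 d2 x y. d1 \<in> D \<Longrightarrow> d2 \<in> D \<Longrightarrow> d1 \<noteq> d2 \<Longrightarrow>
      x \<in> r\<^sup>* `` {d1} \<Longrightarrow> y \<in> r\<^sup>* `` {d2} \<Longrightarrow> (x, y) \<notin> r"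
proof -
  obtain D where cover: "\<And>x. \<exists>d\<in>D. x \<in> r\<^sup>* `` {d}"
    and disjoint: "\<And>d1 d2. d1 \<in> D \<Longrightarrow> d2 \<in> D \<Longrightarrow> d1 \<noteq> d2 \<Longrightarrow> r\<^sup>* `` {d1} \<inter> r\<^sup>* `` {d2} = {}"
    by (erule equiv_class_representatives[OF equiv_rtrancl[OF assms(1)]])
  show thesis
  proof (rule that[OF cover disjoint])
    show "countable (r\<^sup>* `` {d})" for d
      using countable_rtrancl_Image_singleton[OF assms(2)] .
    show "(x, y) \<notin> r"
      if d: "d1 \<in> D" "d2 \<in> D" "d1 \<noteq> d2" and "x \<in> r\<^sup>* `` {d1}" "y \<in> r\<^sup>* `` {d2}"
      for d1 d2 x y
    proof
      assume "(x, y) \<in> r"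
      with \<open>x \<in> r\<^sup>* `` {d1}\<close> have "y \<in> r\<^sup>* `` {d1}"
        by (simp add: rtrancl_into_rtrancl)
      with \<open>y \<in> r\<^sup>* `` {d2}\<close> show False
        using disjoint[OF d] by blast
    qed
  qed
qed

definition support_edges :: "'g set \<Rightarrow> 'd set \<Rightarrow> ('d \<Rightarrow> 'g \<Rightarrow> 'b::zero) \<Rightarrow> ('g + 'd) rel" where
  "support_edges \<Gamma> \<Delta> f = {(Inl \<gamma>, Inr \<delta>) | \<gamma> \<delta>. \<gamma> \<in> \<Gamma> \<and> \<delta> \<in> \<Delta> \<and> f \<delta> \<gamma> \<noteq> 0}"

lemma countable_support_edges_neighbours:
  assumes "\<And>\<delta>. \<delta> \<in> \<Delta> \<Longrightarrow> countable {\<gamma> \<in> \<Gamma>. f \<delta> \<gamma> \<noteq> 0}"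
    and "\<And>\<gamma>. \<gamma> \<in> \<Gamma> \<Longrightarrow> countable {\<delta> \<in> \<Delta>. f \<delta> \<gamma> \<noteq> 0}"
  shows "countable ((support_edges \<Gamma> \<Delta> f \<union> (support_edges \<Gamma> \<Delta> f)\<inverse>) `` {x})"
proof (cases x)
  case (Inl \<gamma>)
  then have "(support_edges \<Gamma> \<Delta> f \<union> (support_edges \<Gamma> \<Delta> f)\<inverse>) `` {x} =
      Inr ` {\<delta> \<in> \<Delta>. \<gamma> \<in> \<Gamma> \<and> f \<delta> \<gamma> \<noteq> 0}"
    by (auto simp: support_edges_def)
  then show ?thesis using assms(2) by (cases "\<gamma> \<in> \<Gamma>") simp_all
next
  case (Inr \<delta>)
  then have "(support_edges \<Gamma> \<Delta> f \<union> (support_edges \<Gamma> \<Delta> f)\<inverse>) `` {x} =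
      Inl ` {\<gamma> \<in> \<Gamma>. \<delta> \<in> \<Delta> \<and> f \<delta> \<gamma> \<noteq> 0}"
    by (auto simp: support_edges_def)
  then show ?thesis using assms(1) by (cases "\<delta> \<in> \<Delta>") simp_all
qed

theorem lemma3p7:
  fixes \<Gamma> :: "'g set" and \<Delta> :: "'d set" and f :: "'d \<Rightarrow> 'g \<Rightarrow> real"
  assumes supp_countable: "\<And>\<delta>. \<delta> \<in> \<Delta> \<Longrightarrow> countable {\<gamma> \<in> \<Gamma>. f \<delta> \<gamma> \<noteq> 0}"
    and col_nonempty: "\<And>\<gamma>. \<gamma> \<in> \<Gamma> \<Longrightarrow> {\<delta> \<in> \<Delta>. f \<delta> \<gamma> \<noteq> 0} \<noteq> {}"
    and col_countable: "\<And>\<gamma>. \<gamma> \<in> \<Gamma> \<Longrightarrow> countable {\<delta> \<in> \<Delta>. f \<delta> \<gamma> \<noteq> 0}"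
  shows "\<exists>(D :: ('g + 'd) set) (G :: 'g + 'd \<Rightarrow> 'g set) (E :: 'g + 'd \<Rightarrow> 'd set).
           (\<Union>d\<in>D. G d) = \<Gamma> \<and> (\<Union>d\<in>D. E d) = \<Delta> \<and>
           (\<forall>d\<in>D. countable (G d) \<and> countable (E d)) \<and>
           (\<forall>d1\<in>D. \<forall>d2\<in>D. d1 \<noteq> d2 \<longrightarrow>
              G d1 \<inter> G d2 = {} \<and> E d1 \<inter> E d2 = {} \<and>
              (\<forall>\<gamma>\<in>G d1. \<forall>\<delta>\<in>E d2. f \<delta> \<gamma> = 0) \<and>
              (\<forall>\<gamma>\<in>G d2. \<forall>\<delta>\<in>E d1. f \<delta> \<gamma> = 0))"
proof -
  let ?S = "support_edges \<Gamma> \<Delta> f \<union> (support_edges \<Gamma> \<Delta> f)\<inverse>"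
  let ?C = "\<lambda>d. ?S\<^sup>* `` {d}"
  obtain D where cover: "\<And>x. \<exists>d\<in>D. x \<in> ?C d"
    and disjoint: "\<And>d1 d2. d1 \<in> D \<Longrightarrow> d2 \<in> D \<Longrightarrow> d1 \<noteq> d2 \<Longrightarrow> ?C d1 \<inter> ?C d2 = {}"
    and countable_C: "\<And>d. countable (?C d)"
    and no_edge: "\<And>d1 d2 x y. d1 \<in> D \<Longrightarrow> d2 \<in> D \<Longrightarrow> d1 \<noteq> d2 \<Longrightarrow>
      x \<in> ?C d1 \<Longrightarrow> y \<in> ?C d2 \<Longrightarrow> (x, y) \<notin> ?S"
    using countable_components[OF sym_Un_converse
        countable_support_edges_neighbours[OF supp_countable col_countable]]
    by blast
  define G where "G d = {\<gamma> \<in> \<Gamma>. Inl \<gamma> \<in> ?C d}" for d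
  define E where "E d = {\<delta> \<in> \<Delta>. Inr \<delta> \<in> ?C d}" for d
  have "(\<Union>d\<in>D. G d) = \<Gamma>" "(\<Union>d\<in>D. E d) = \<Delta>"
    using cover[of "Inl _"] cover[of "Inr _"] by (auto simp: G_def E_def)
  moreover have "countable (G d)" "countable (E d)" for d
    unfolding G_def E_def
    by (rule countable_image_inj_gen[OF inj_Inl countable_C]
        countable_image_inj_gen[OF inj_Inr countable_C])+
  moreover have "G d1 \<inter> G d2 = {}" "E d1 \<inter> E d2 = {}"
    if "d1 \<in> D" "d2 \<in> D" "d1 \<noteq> d2" for d1 d2
    using disjoint[OF that] by (auto simp: G_def E_def)
  moreover have "f \<delta> \<gamma> = 0"
    if "d1 \<in> D" "d2 \<in> D" "d1 \<noteq> d2" "\<gamma> \<in> G d1" "\<delta> \<in> E d2" for d1 d2 \<gamma> \<delta>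
    using no_edge[OF that(1-3), of "Inl \<gamma>" "Inr \<delta>"] that(4,5)
    by (simp add: G_def E_def support_edges_def)
  ultimately show ?thesis
    by (intro exI[of _ D] exI[of _ G] exI[of _ E] conjI ballI impI) simp_all
qed

end
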